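(* Let $A$ be a finitely generated abelian group with a finite generating subset $S$. There exists a constant $C>0$ such that for every subgroup $H\le A$, $\det(H)\le C(\|H\|_S)^{\mathrm{rank}_{\mathbb{Z}}(H)}$.
   Context: $\|\cdot\|_S$ is word length; for a subgroup $H$, $\|H\|_S=\min\{\max_{h\in X}\|h\|_S: X\text{ a finite generating subset of }H\}$. $\sqrt[A]{H}=\{a\in A:a^m\in H\text{ for some } m\ge1\}$ and $\det(H)=[\sqrt[A]{H}:H]$. $\mathrm{rank}_{\mathbb{Z}}$ is torsion-free rank. *)

theory Defs
  imports Complex_Main
begin

text \<open>The ambient finitely generated abelian group A is the whole type 'a::ab_group_add.\<close>

definition subgrp :: "'a::ab_group_add set \<Rightarrow> bool" where
  "subgrp H \<longleftrightarrow> 0 \<in> H \<and> (\<forall>x\<in>H. \<forall>y\<in>H. x + y \<in> H) \<and> (\<forall>x\<in>H. - x \<in> H)"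

definition gen :: "'a::ab_group_add set \<Rightarrow> 'a set" where
  "gen X = \<Inter> {H. subgrp H \<and> X \<subseteq> H}"

primrec nsmul :: "nat \<Rightarrow> 'a::ab_group_add \<Rightarrow> 'a" where
  "nsmul 0 a = 0"
| "nsmul (Suc n) a = a + nsmul n a"

definition zsmul :: "int \<Rightarrow> 'a::ab_group_add \<Rightarrow> 'a" where
  "zsmul k a = (if 0 \<le> k then nsmul (nat k) a else - nsmul (nat (- k)) a)"

definition wordlen :: "'a::ab_group_add set \<Rightarrow> 'a \<Rightarrow> nat" where
  "wordlen S a = (LEAST n. \<exists>xs. length xs = n \<and> set xs \<subseteq> S \<union> uminus ` S \<and> sum_list xs = a)"

text \<open>||H||_S: minimum over finite generating sets X of H of the maximal word length in X
  (the maximum over the empty set being 0).\<close>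
definition subgrp_norm :: "'a::ab_group_add set \<Rightarrow> 'a set \<Rightarrow> nat" where
  "subgrp_norm S H = (LEAST m. \<exists>X. finite X \<and> gen X = H \<and> (\<forall>h\<in>X. wordlen S h \<le> m))"

definition isolator :: "'a::ab_group_add set \<Rightarrow> 'a set" where
  "isolator H = {a. \<exists>m::nat. m \<ge> 1 \<and> nsmul m a \<in> H}"

definition index :: "'a::ab_group_add set \<Rightarrow> 'a set \<Rightarrow> nat" where
  "index K H = card {(\<lambda>h. a + h) ` H | a. a \<in> K}"

definition det_sub :: "'a::ab_group_add set \<Rightarrow> nat" where
  "det_sub H = index (isolator H) H"

definition Z_indep :: "'a::ab_group_add set \<Rightarrow> bool" where
  "Z_indep X \<longleftrightarrow> finite X \<and>
     (\<forall>c::'a \<Rightarrow> int. (\<Sum>x\<in>X. zsmul (c x) x) = 0 \<longrightarrow> (\<forall>x\<in>X. c x = 0))"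

definition rankZ :: "'a::ab_group_add set \<Rightarrow> nat" where
  "rankZ H = Sup {card X | X. X \<subseteq> H \<and> Z_indep X}"

end

theory Submission
  imports Defs "HOL-Library.FuncSet"
begin

text \<open>Choose a maximal independent subset E of S and M \<ge> 1 with M a \<in> \<langle>E\<rangle> for all a. The
  E-coordinates of M a define a homomorphism A \<rightarrow> \<int>^E whose kernel is the (finite) torsion
  subgroup T, and the l1-norm of these coordinates is at most a constant times the word length.
  Given H generated by elements of length at most n, let Y be a maximal independent subset of
  these generators; then |Y| \<le> rank H and the isolator of H lies in the isolator of \<langle>Y\<rangle>, where
  every element has rational Y-coordinates. Two such elements whose fractional Y-coordinates fall
  into the same cell of a grid of mesh 1/(|Y| B), with B of order n, differ modulo \<langle>Y\<rangle> by an
  element of norm less than 1, i.e. by torsion, because non-torsion elements have norm at least 1.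
  Hence det H \<le> [sqrt H : \<langle>Y\<rangle>] \<le> |T| (|Y| B)^|Y|.\<close>

section \<open>Integer multiples\<close>

lemma nsmul_add_left: "nsmul (m + n) a = nsmul m a + nsmul n a"
  by (induction m) (auto simp: algebra_simps)

lemma nsmul_add_right: "nsmul n (a + b) = nsmul n a + nsmul n b"
  by (induction n) (auto simp: algebra_simps)

lemma nsmul_zero_right [simp]: "nsmul n (0::'a::ab_group_add) = 0"
  by (induction n) auto

lemma nsmul_minus_right: "nsmul n (- a) = - nsmul n a"
  by (induction n) (auto simp: algebra_simps)

lemma nsmul_mult: "nsmul (m * n) a = nsmul m (nsmul n a)"
  by (induction m) (auto simp: nsmul_add_left nsmul_add_right)

lemma nsmul_commute: "nsmul m (nsmul n a) = nsmul n (nsmul m a)"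
  by (metis nsmul_mult mult.commute)

lemma nsmul_sum: "nsmul n (\<Sum>x\<in>A. f x) = (\<Sum>x\<in>A. nsmul n (f x))"
  by (induction A rule: infinite_finite_induct) (auto simp: nsmul_add_right)

lemma zsmul_of_nat_diff:
  assumes "int p - int q = i"
  shows "zsmul i a = nsmul p a - nsmul q a"
proof (cases "0 \<le> i")
  case True
  then have "p = nat i + q" using assms by auto
  then show ?thesis using True by (simp add: zsmul_def nsmul_add_left)
next
  case False
  then have "q = nat (- i) + p" using assms by auto
  then show ?thesis using False by (simp add: zsmul_def nsmul_add_left)
qed

lemma zsmul_zero_left [simp]: "zsmul 0 a = 0"
  by (simp add: zsmul_def)

lemma zsmul_one [simp]: "zsmul 1 a = a"
  by (simp add: zsmul_def)

lemma zsmul_add_left: "zsmul (i + j) a = zsmul i a + zsmul j a"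
proof -
  have "zsmul (i + j) a = nsmul (nat i + nat j) a - nsmul (nat (- i) + nat (- j)) a"
    by (rule zsmul_of_nat_diff) auto
  moreover have "zsmul i a = nsmul (nat i) a - nsmul (nat (- i)) a"
    by (rule zsmul_of_nat_diff) auto
  moreover have "zsmul j a = nsmul (nat j) a - nsmul (nat (- j)) a"
    by (rule zsmul_of_nat_diff) auto
  ultimately show ?thesis by (simp only:) (simp add: nsmul_add_left algebra_simps)
qed

lemma zsmul_minus_left: "zsmul (- i) a = - zsmul i a"
  using zsmul_add_left[of i "- i" a] by (simp add: eq_neg_iff_add_eq_0 add.commute)

lemma zsmul_diff_left: "zsmul (i - j) a = zsmul i a - zsmul j a"
  using zsmul_add_left[of i "- j" a] zsmul_minus_left[of j a] by simp

lemma nsmul_zsmul: "nsmul n (zsmul i a) = zsmul (int n * i) a"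
  by (induction n) (simp_all add: zsmul_add_left algebra_simps)

section \<open>Subgroups and integer combinations\<close>

lemma subgrp_zero: "subgrp H \<Longrightarrow> 0 \<in> H"
  by (simp add: subgrp_def)

lemma subgrp_add: "subgrp H \<Longrightarrow> a \<in> H \<Longrightarrow> b \<in> H \<Longrightarrow> a + b \<in> H"
  by (simp add: subgrp_def)

lemma subgrp_minus: "subgrp H \<Longrightarrow> a \<in> H \<Longrightarrow> - a \<in> H"
  by (simp add: subgrp_def)

lemma subgrp_diff: "subgrp H \<Longrightarrow> a \<in> H \<Longrightarrow> b \<in> H \<Longrightarrow> a - b \<in> H"
  using subgrp_add[of H a "- b"] subgrp_minus[of H b] by simp

lemma subgrp_nsmul: "subgrp H \<Longrightarrow> a \<in> H \<Longrightarrow> nsmul n a \<in> H"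
  by (induction n) (auto simp: subgrp_zero subgrp_add)

lemma subgrp_zsmul: "subgrp H \<Longrightarrow> a \<in> H \<Longrightarrow> zsmul i a \<in> H"
  by (simp add: zsmul_def subgrp_nsmul subgrp_minus)

lemma subgrp_sum: "subgrp H \<Longrightarrow> (\<And>x. x \<in> A \<Longrightarrow> f x \<in> H) \<Longrightarrow> (\<Sum>x\<in>A. f x) \<in> H"
  by (induction A rule: infinite_finite_induct) (auto simp: subgrp_zero subgrp_add)

lemma subgrp_singleton_zero: "subgrp {0}"
  by (simp add: subgrp_def)

lemma subgrp_gen: "subgrp (gen X)"
  unfolding gen_def subgrp_def by blast

lemma gen_subset: "X \<subseteq> gen X"
  unfolding gen_def by blast

lemma gen_least: "subgrp H \<Longrightarrow> X \<subseteq> H \<Longrightarrow> gen X \<subseteq> H"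
  unfolding gen_def by blast

definition zcomb :: "'a::ab_group_add set \<Rightarrow> ('a \<Rightarrow> int) \<Rightarrow> 'a" where
  "zcomb Z c = (\<Sum>z\<in>Z. zsmul (c z) z)"

definition zspan :: "'a::ab_group_add set \<Rightarrow> 'a set" where
  "zspan Z = range (zcomb Z)"

lemma zcomb_add: "zcomb Z c + zcomb Z d = zcomb Z (\<lambda>z. c z + d z)"
  by (simp add: zcomb_def zsmul_add_left sum.distrib)

lemma zcomb_diff: "zcomb Z c - zcomb Z d = zcomb Z (\<lambda>z. c z - d z)"
  by (simp add: zcomb_def zsmul_diff_left sum_subtractf)

lemma zcomb_minus: "- zcomb Z c = zcomb Z (\<lambda>z. - c z)"
  by (simp add: zcomb_def zsmul_minus_left sum_negf)

lemma zcomb_nsmul: "nsmul n (zcomb Z c) = zcomb Z (\<lambda>z. int n * c z)"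
  by (simp add: zcomb_def nsmul_sum nsmul_zsmul)

lemma zcomb_zero: "zcomb Z (\<lambda>z. 0) = 0"
  by (simp add: zcomb_def)

lemma zcomb_cong: "(\<And>z. z \<in> Z \<Longrightarrow> c z = d z) \<Longrightarrow> zcomb Z c = zcomb Z d"
  by (simp add: zcomb_def)

lemma zcomb_in_zspan: "zcomb Z c \<in> zspan Z"
  unfolding zspan_def by (rule rangeI)

lemma subgrp_zcomb: "subgrp H \<Longrightarrow> Z \<subseteq> H \<Longrightarrow> zcomb Z c \<in> H"
  using subgrp_sum[of H Z "\<lambda>z. zsmul (c z) z"] subgrp_zsmul[of H] by (auto simp: zcomb_def)

lemma subgrp_zspan: "subgrp (zspan Z)"
  unfolding subgrp_def zspan_def
  by (auto simp: zcomb_add zcomb_minus) (metis rangeI zcomb_zero)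

lemma mem_zspan: "finite Z \<Longrightarrow> z \<in> Z \<Longrightarrow> z \<in> zspan Z"
proof -
  assume "finite Z" "z \<in> Z"
  have "zcomb Z (\<lambda>x. if x = z then 1 else 0) = (\<Sum>x\<in>Z. if x = z then z else 0)"
    unfolding zcomb_def by (rule sum.cong) auto
  also have "\<dots> = z" using \<open>finite Z\<close> \<open>z \<in> Z\<close> by simp
  finally show ?thesis by (metis zcomb_in_zspan)
qed

lemma zspan_subset_gen: "zspan Z \<subseteq> gen Z"
  unfolding zspan_def using subgrp_zcomb[OF subgrp_gen gen_subset] by blast

lemma gen_eq_zspan: "finite Z \<Longrightarrow> gen Z = zspan Z"
  using gen_least[OF subgrp_zspan, of Z Z] mem_zspan[of Z] zspan_subset_gen[of Z] by blast

lemma Z_indep_finite: "Z_indep Z \<Longrightarrow> finite Z"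
  by (simp add: Z_indep_def)

lemma Z_indep_zcomb_eq_0:
  assumes "Z_indep Z" "zcomb Z c = 0" "z \<in> Z"
  shows "c z = 0"
  using assms unfolding Z_indep_def zcomb_def by blast

lemma Z_indep_zcomb_eq:
  assumes "Z_indep Z" "zcomb Z c = zcomb Z d" "z \<in> Z"
  shows "c z = d z"
  using Z_indep_zcomb_eq_0[OF assms(1) _ assms(3), of "\<lambda>z. c z - d z"] assms(2) zcomb_diff[of Z c d]
  by simp

lemma Z_indep_zero_notin:
  assumes "Z_indep Z" shows "0 \<notin> Z"
proof
  assume "0 \<in> Z"
  have "zcomb Z (\<lambda>x. if x = 0 then 1 else 0) = 0"
    unfolding zcomb_def by (rule sum.neutral) simp
  from Z_indep_zcomb_eq_0[OF assms this \<open>0 \<in> Z\<close>] show False by simp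
qed

lemma rankZ_eq_0:
  assumes "H \<subseteq> {0}" shows "rankZ H = 0"
proof -
  have "{card X | X. X \<subseteq> H \<and> Z_indep X} = {0}"
  proof (intro equalityI subsetI)
    fix x assume "x \<in> {card X | X. X \<subseteq> H \<and> Z_indep X}"
    then obtain X where "x = card X" "X \<subseteq> H" "Z_indep X" by blast
    then show "x \<in> {0}" using assms Z_indep_zero_notin[of X] by (auto simp: subset_singleton_iff)
  next
    fix x :: nat assume "x \<in> {0}"
    moreover have "Z_indep {}" by (simp add: Z_indep_def)
    ultimately show "x \<in> {card X | X. X \<subseteq> H \<and> Z_indep X}" by force
  qed
  then show ?thesis unfolding rankZ_def by simp
qed

section \<open>Cosets and indices\<close>

definition cosets :: "'a::ab_group_add set \<Rightarrow> 'a set \<Rightarrow> 'a set set" where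
  "cosets K W = {(\<lambda>h. a + h) ` W | a. a \<in> K}"

lemma index_eq_card_cosets: "index K W = card (cosets K W)"
  by (simp add: index_def cosets_def)

lemma coset_eq:
  assumes W: "subgrp W" and "a - b \<in> W"
  shows "(\<lambda>h. a + h) ` W = (\<lambda>h. b + h) ` W"
proof -
  have shift: "(\<lambda>h. a + h) ` W \<subseteq> (\<lambda>h. b + h) ` W" if "a - b \<in> W" for a b :: 'a
  proof
    fix x assume "x \<in> (\<lambda>h. a + h) ` W"
    then obtain h where h: "h \<in> W" "x = a + h" by blast
    have "(a - b) + h \<in> W" using that h subgrp_add[OF W] by blast
    moreover have "x = b + ((a - b) + h)" using h by (simp add: algebra_simps)
    ultimately show "x \<in> (\<lambda>h. b + h) ` W" by blast
  qed
  have "b - a \<in> W" using subgrp_minus[OF W assms(2)] by (simp add: minus_diff_eq)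
  then show ?thesis using shift assms(2) by blast
qed

lemma index_antimono:
  assumes H: "subgrp H" and W: "subgrp W" "W \<subseteq> H" and fin: "finite (cosets K W)"
  shows "index K H \<le> index K W"
proof -
  define lift where "lift C = (\<Union>c\<in>C. (\<lambda>h. c + h) ` H)" for C
  have lift_coset: "lift ((\<lambda>h. a + h) ` W) = (\<lambda>h. a + h) ` H" for a
  proof -
    have "lift ((\<lambda>h. a + h) ` W) = (\<Union>w\<in>W. (\<lambda>h. (a + w) + h) ` H)"
      unfolding lift_def by (simp add: image_image)
    also have "\<dots> = (\<Union>w\<in>W. (\<lambda>h. a + h) ` H)"
      using W by (intro SUP_cong refl coset_eq[OF H]) auto
    also have "\<dots> = (\<lambda>h. a + h) ` H"
      using subgrp_zero[OF W(1)] by auto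
    finally show ?thesis .
  qed
  have "cosets K H = lift ` cosets K W"
    unfolding cosets_def using lift_coset by auto
  then show ?thesis
    unfolding index_eq_card_cosets using card_image_le[OF fin] by simp
qed

text \<open>Pigeonhole: f sorts the elements of K into boxes, and g moves each element within its
  coset so that elements in the same box end up differing by an element of T.\<close>

lemma card_cosets_le_pigeonhole:
  assumes W: "subgrp W" and fin: "finite P" "finite T"
    and f: "\<And>k. k \<in> K \<Longrightarrow> f k \<in> P"
    and g: "\<And>k. k \<in> K \<Longrightarrow> k - g k \<in> W"
    and box: "\<And>k k'. k \<in> K \<Longrightarrow> k' \<in> K \<Longrightarrow> f k = f k' \<Longrightarrow> g k - g k' \<in> T"
  shows "finite (cosets K W) \<and> card (cosets K W) \<le> card P * card T"
proof -
  define rep where "rep p = (SOME k. k \<in> K \<and> f k = p)" for p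
  define F where "F pt = (\<lambda>h. (g (rep (fst pt)) + snd pt) + h) ` W" for pt
  have sub: "cosets K W \<subseteq> F ` (P \<times> T)"
  proof
    fix C assume "C \<in> cosets K W"
    then obtain a where a: "a \<in> K" "C = (\<lambda>h. a + h) ` W" unfolding cosets_def by blast
    have r: "rep (f a) \<in> K" "f (rep (f a)) = f a"
      using someI_ex[of "\<lambda>k. k \<in> K \<and> f k = f a"] a(1) unfolding rep_def by blast+
    define t where "t = g a - g (rep (f a))"
    have "t \<in> T" unfolding t_def using box[OF a(1) r(1)] r(2) by simp
    have "C = (\<lambda>h. g a + h) ` W" using a coset_eq[OF W g] by blast
    also have "\<dots> = F (f a, t)" unfolding F_def t_def by simp
    finally show "C \<in> F ` (P \<times> T)" using \<open>t \<in> T\<close> f[OF a(1)] by blast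
  qed
  have fin_F: "finite (F ` (P \<times> T))" using fin by simp
  have "card (cosets K W) \<le> card (F ` (P \<times> T))" by (rule card_mono[OF fin_F sub])
  also have "\<dots> \<le> card (P \<times> T)" using fin by (intro card_image_le) simp
  finally show ?thesis using finite_subset[OF sub fin_F] fin by (simp add: card_cartesian_product)
qed

lemma finitely_generated_if_finite_cosets:
  assumes H: "subgrp H" and Y: "finite Y" "Y \<subseteq> H" and fin: "finite (cosets H (zspan Y))"
  shows "\<exists>X. finite X \<and> gen X = H"
proof -
  define rep where "rep C = (SOME a. a \<in> H \<and> C = (\<lambda>h. a + h) ` zspan Y)" for C
  define X where "X = Y \<union> rep ` cosets H (zspan Y)"
  have rep: "rep C \<in> H \<and> C = (\<lambda>h. rep C + h) ` zspan Y" if "C \<in> cosets H (zspan Y)" for C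
  proof -
    have "\<exists>a. a \<in> H \<and> C = (\<lambda>h. a + h) ` zspan Y" using that unfolding cosets_def by blast
    then show ?thesis unfolding rep_def by (rule someI_ex)
  qed
  have "H \<subseteq> gen X"
  proof
    fix h assume h: "h \<in> H"
    let ?C = "(\<lambda>x. h + x) ` zspan Y"
    have C: "?C \<in> cosets H (zspan Y)" unfolding cosets_def using h by blast
    have "h \<in> ?C" using subgrp_zero[OF subgrp_zspan, of Y] by (metis add_0_right image_eqI)
    then obtain w where w: "w \<in> zspan Y" "h = rep ?C + w" using rep[OF C] by auto
    have "rep ?C \<in> gen X" using C gen_subset[of X] unfolding X_def by blast
    moreover have "w \<in> gen X"
      using w(1) zspan_subset_gen[of Y] gen_least[OF subgrp_gen, of Y X] gen_subset[of X]
      unfolding X_def by blast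
    ultimately have "rep ?C + w \<in> gen X" by (rule subgrp_add[OF subgrp_gen])
    then show "h \<in> gen X" by (simp only: w(2)[symmetric])
  qed
  moreover have "X \<subseteq> H" unfolding X_def using Y(2) rep by auto
  then have "gen X \<subseteq> H" by (rule gen_least[OF H])
  moreover have "finite X" unfolding X_def using Y(1) fin by simp
  ultimately show ?thesis by blast
qed

section \<open>Isolators and maximal independent sets\<close>

lemma isolatorI: "m \<ge> 1 \<Longrightarrow> nsmul m a \<in> H \<Longrightarrow> a \<in> isolator H"
  unfolding isolator_def by blast

lemma isolatorE:
  assumes "a \<in> isolator H" obtains m where "m \<ge> 1" "nsmul m a \<in> H"
  using assms unfolding isolator_def by blast

lemma subset_isolator: "H \<subseteq> isolator H"
  by (auto intro: isolatorI[of 1])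

lemma subgrp_isolator:
  assumes H: "subgrp H" shows "subgrp (isolator H)"
  unfolding subgrp_def
proof (intro conjI ballI)
  show "0 \<in> isolator H" using subgrp_zero[OF H] subset_isolator by blast
next
  fix x y assume "x \<in> isolator H" "y \<in> isolator H"
  then obtain m n where mn: "m \<ge> 1" "nsmul m x \<in> H" "n \<ge> 1" "nsmul n y \<in> H"
    by (metis isolatorE)
  then have "nsmul (n * m) x \<in> H" "nsmul (m * n) y \<in> H"
    using subgrp_nsmul[OF H] by (simp_all add: nsmul_mult)
  then have "nsmul (m * n) (x + y) \<in> H"
    by (simp add: nsmul_add_right subgrp_add[OF H] mult.commute)
  then show "x + y \<in> isolator H" using mn by (intro isolatorI) auto
next
  fix x assume "x \<in> isolator H"
  then obtain m where "m \<ge> 1" "nsmul m x \<in> H" by (rule isolatorE)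
  then show "- x \<in> isolator H"
    by (intro isolatorI[of m]) (simp_all add: nsmul_minus_right subgrp_minus[OF H])
qed

lemma isolator_subset_isolator:
  assumes "H \<subseteq> isolator W" shows "isolator H \<subseteq> isolator W"
proof
  fix a assume "a \<in> isolator H"
  then obtain m where m: "m \<ge> 1" "nsmul m a \<in> H" by (rule isolatorE)
  then obtain m' where m': "m' \<ge> 1" "nsmul m' (nsmul m a) \<in> W" using assms by (metis isolatorE subsetD)
  then show "a \<in> isolator W" using m by (intro isolatorI[of "m' * m"]) (auto simp: nsmul_mult)
qed

lemma isolator_if_zsmul:
  assumes H: "subgrp H" and "zsmul i a \<in> H" "i \<noteq> 0"
  shows "a \<in> isolator H"
proof (cases "0 < i")
  case True
  then show ?thesis using assms by (intro isolatorI[of "nat i"]) (auto simp: zsmul_def)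
next
  case False
  then show ?thesis using assms subgrp_minus[OF H, of "zsmul i a"]
    by (intro isolatorI[of "nat (- i)"]) (auto simp: zsmul_def)
qed

abbreviation torsion :: "'a::ab_group_add set" where
  "torsion \<equiv> isolator {0}"

lemma exists_maximal_Z_indep:
  assumes "\<And>Y. Y \<subseteq> Z \<Longrightarrow> Z_indep Y \<Longrightarrow> card Y \<le> b"
  obtains Y where "Y \<subseteq> Z" "Z_indep Y" "\<And>Y'. Y' \<subseteq> Z \<Longrightarrow> Z_indep Y' \<Longrightarrow> card Y' \<le> card Y"
proof -
  have "Z_indep {}" by (simp add: Z_indep_def)
  moreover have "\<forall>Y. Y \<subseteq> Z \<and> Z_indep Y \<longrightarrow> card Y < b + 1"
    using assms by (simp add: less_Suc_eq_le)
  ultimately obtain Y where "Y \<subseteq> Z \<and> Z_indep Y"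
    "\<forall>Y'. Y' \<subseteq> Z \<and> Z_indep Y' \<longrightarrow> card Y' \<le> card Y"
    using ex_has_greatest_nat[of "\<lambda>Y. Y \<subseteq> Z \<and> Z_indep Y" "{}" card "b + 1"] by auto
  then show ?thesis using that by blast
qed

lemma maximal_Z_indep_subset_isolator:
  assumes Y: "Y \<subseteq> Z" "Z_indep Y"
    and max: "\<And>Y'. Y' \<subseteq> Z \<Longrightarrow> Z_indep Y' \<Longrightarrow> card Y' \<le> card Y"
  shows "Z \<subseteq> isolator (zspan Y)"
proof
  fix z assume z: "z \<in> Z"
  have fY: "finite Y" using Y(2) by (rule Z_indep_finite)
  show "z \<in> isolator (zspan Y)"
  proof (cases "z \<in> Y")
    case True
    then show ?thesis using mem_zspan[OF fY] subset_isolator by blast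
  next
    case False
    then have "\<not> Z_indep (insert z Y)" using max[of "insert z Y"] Y(1) z fY by auto
    then obtain c where c: "zcomb (insert z Y) c = 0" "\<exists>x\<in>insert z Y. c x \<noteq> 0"
      using fY unfolding Z_indep_def zcomb_def by blast
    have split: "zcomb (insert z Y) c = zsmul (c z) z + zcomb Y c"
      unfolding zcomb_def using False fY by simp
    have "c z \<noteq> 0"
    proof
      assume "c z = 0"
      then have "zcomb Y c = 0" using c(1) split by simp
      then show False using c(2) \<open>c z = 0\<close> Z_indep_zcomb_eq_0[OF Y(2)] by blast
    qed
    have "zsmul (c z) z + zcomb Y c = 0" using c(1) split by simp
    then have "zsmul (c z) z = zcomb Y (\<lambda>y. - c y)"
      unfolding zcomb_minus[symmetric] by (simp only: eq_neg_iff_add_eq_0)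
    then have "zsmul (c z) z \<in> zspan Y" by (simp only: zcomb_in_zspan)
    then show ?thesis using isolator_if_zsmul[OF subgrp_zspan] \<open>c z \<noteq> 0\<close> by blast
  qed
qed

section \<open>Rational coordinates\<close>

text \<open>Meaningful only for independent Y and a \<in> isolator (zspan Y); elsewhere the value is
  unspecified.\<close>

definition rat_coord :: "'a::ab_group_add set \<Rightarrow> 'a \<Rightarrow> 'a \<Rightarrow> real" where
  "rat_coord Y a = (SOME f. \<exists>m c. m \<ge> 1 \<and> nsmul m a = zcomb Y c \<and>
      f = (\<lambda>y. if y \<in> Y then of_int (c y) / real m else 0))"

lemma rat_coord_eq:
  assumes Y: "Z_indep Y" and m: "m \<ge> 1" and eq: "nsmul m a = zcomb Y c" and y: "y \<in> Y"
  shows "rat_coord Y a y = of_int (c y) / real m"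
proof -
  have "\<exists>f m c. m \<ge> 1 \<and> nsmul m a = zcomb Y c \<and>
      f = (\<lambda>y. if y \<in> Y then real_of_int (c y) / real m else 0)"
    using m eq by blast
  from someI_ex[OF this] obtain m' c' where m': "m' \<ge> 1" "nsmul m' a = zcomb Y c'"
    and t: "rat_coord Y a = (\<lambda>y. if y \<in> Y then of_int (c' y) / real m' else 0)"
    unfolding rat_coord_def by blast
  have "zcomb Y (\<lambda>y. int m' * c y) = zcomb Y (\<lambda>y. int m * c' y)"
    using nsmul_commute[of m' m a] eq m'(2) zcomb_nsmul by metis
  then have "int m' * c y = int m * c' y"
    using Z_indep_zcomb_eq[OF Y _ y] by blast
  then have "real m' * of_int (c y) = real m * of_int (c' y)"
    by (metis of_int_mult of_int_of_nat_eq)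
  then show ?thesis unfolding t using y m m'(1) by (simp add: field_simps)
qed

lemma rat_coord_zcomb:
  "Z_indep Y \<Longrightarrow> y \<in> Y \<Longrightarrow> rat_coord Y (zcomb Y c) y = of_int (c y)"
  using rat_coord_eq[of Y 1 "zcomb Y c" c y] by simp

lemma rat_coord_add:
  assumes Y: "Z_indep Y" and a: "a \<in> isolator (zspan Y)" and b: "b \<in> isolator (zspan Y)"
    and y: "y \<in> Y"
  shows "rat_coord Y (a + b) y = rat_coord Y a y + rat_coord Y b y"
proof -
  obtain m c where m: "m \<ge> 1" and c: "nsmul m a = zcomb Y c"
    using a by (elim isolatorE) (auto simp: zspan_def)
  obtain n d where n: "n \<ge> 1" and d: "nsmul n b = zcomb Y d"
    using b by (elim isolatorE) (auto simp: zspan_def)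
  have "nsmul (m * n) (a + b) = nsmul n (nsmul m a) + nsmul m (nsmul n b)"
    by (simp add: nsmul_add_right nsmul_mult nsmul_commute[of m n])
  also have "\<dots> = zcomb Y (\<lambda>y. int n * c y + int m * d y)"
    using c d by (simp add: zcomb_nsmul zcomb_add)
  finally have "rat_coord Y (a + b) y = of_int (int n * c y + int m * d y) / real (m * n)"
    using m n by (intro rat_coord_eq[OF Y _ _ y]) simp_all
  then show ?thesis
    unfolding rat_coord_eq[OF Y m c y] rat_coord_eq[OF Y n d y] using m n
    by (simp add: field_simps)
qed

lemma rat_coord_diff:
  assumes Y: "Z_indep Y" and a: "a \<in> isolator (zspan Y)" and b: "b \<in> isolator (zspan Y)"
    and y: "y \<in> Y"
  shows "rat_coord Y (a - b) y = rat_coord Y a y - rat_coord Y b y"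
proof -
  have iso: "subgrp (isolator (zspan Y))" by (rule subgrp_isolator[OF subgrp_zspan])
  have "rat_coord Y ((a - b) + b) y = rat_coord Y (a - b) y + rat_coord Y b y"
    using rat_coord_add[OF Y _ b y] subgrp_diff[OF iso a b] by blast
  then show ?thesis by simp
qed

lemma rat_coord_minus_floor:
  assumes Y: "Z_indep Y" and a: "a \<in> isolator (zspan Y)" and y: "y \<in> Y"
  shows "rat_coord Y (a - zcomb Y (\<lambda>y. \<lfloor>rat_coord Y a y\<rfloor>)) y = frac (rat_coord Y a y)"
proof -
  have "zcomb Y (\<lambda>y. \<lfloor>rat_coord Y a y\<rfloor>) \<in> isolator (zspan Y)"
    using zcomb_in_zspan subset_isolator by blast
  then show ?thesis
    unfolding frac_def by (simp add: rat_coord_diff[OF Y a _ y] rat_coord_zcomb[OF Y y])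
qed

section \<open>Coordinates modulo torsion\<close>

locale coordinates =
  fixes S :: "'a::ab_group_add set" and E :: "'a set" and M :: nat
  assumes finite_S: "finite S" and gen_S: "gen S = UNIV"
    and indep_E: "Z_indep E" and M_pos: "M \<ge> 1" and nsmul_M: "\<And>a. nsmul M a \<in> zspan E"

lemma coordinates_exist:
  fixes S :: "'a::ab_group_add set"
  assumes S: "finite S" "gen S = UNIV"
  obtains E M where "coordinates S E M"
proof -
  obtain E where E: "E \<subseteq> S" "Z_indep E" "\<And>Y. Y \<subseteq> S \<Longrightarrow> Z_indep Y \<Longrightarrow> card Y \<le> card E"
    by (rule exists_maximal_Z_indep[of _ "card S"]) (auto intro: card_mono[OF S(1)])
  have "S \<subseteq> isolator (zspan E)" by (rule maximal_Z_indep_subset_isolator[OF E])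
  then have "\<forall>s\<in>S. \<exists>m. m \<ge> 1 \<and> nsmul m s \<in> zspan E" unfolding isolator_def by blast
  from bchoice[OF this] obtain f where f: "\<forall>s\<in>S. f s \<ge> 1 \<and> nsmul (f s) s \<in> zspan E"
    by blast
  define M where "M = (\<Prod>s\<in>S. f s)"
  have M: "M \<ge> 1" unfolding M_def using f by (simp add: Suc_le_eq prod_pos)
  have "nsmul M s \<in> zspan E" if s: "s \<in> S" for s
  proof -
    have "M = (\<Prod>x\<in>S - {s}. f x) * f s"
      unfolding M_def using prod.remove[OF S(1) s, of f] by (simp add: mult.commute)
    then show ?thesis
      using subgrp_nsmul[OF subgrp_zspan conjunct2[OF bspec[OF f s]]] by (simp add: nsmul_mult)
  qed
  moreover have "subgrp {a. nsmul M a \<in> zspan E}"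
    unfolding subgrp_def using subgrp_zspan[of E]
    by (auto simp: nsmul_add_right nsmul_minus_right subgrp_add subgrp_minus subgrp_zero)
  ultimately have "gen S \<subseteq> {a. nsmul M a \<in> zspan E}" using gen_least by blast
  then have "coordinates S E M" using S E(2) M by unfold_locales auto
  then show ?thesis by (rule that)
qed

context coordinates
begin

lemma finite_E: "finite E"
  using indep_E by (rule Z_indep_finite)

definition coord :: "'a \<Rightarrow> 'a \<Rightarrow> int" where
  "coord a = (SOME c. nsmul M a = zcomb E c)"

lemma nsmul_M_eq_zcomb_coord: "nsmul M a = zcomb E (coord a)"
proof -
  have "\<exists>c. nsmul M a = zcomb E c" using nsmul_M[of a] unfolding zspan_def by blast
  then show ?thesis unfolding coord_def by (rule someI_ex)
qed

lemma coord_add: "e \<in> E \<Longrightarrow> coord (a + b) e = coord a e + coord b e"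
proof (rule Z_indep_zcomb_eq[OF indep_E])
  show "zcomb E (coord (a + b)) = zcomb E (\<lambda>x. coord a x + coord b x)"
    using nsmul_M_eq_zcomb_coord[of "a + b"] nsmul_M_eq_zcomb_coord[of a] nsmul_M_eq_zcomb_coord[of b]
    by (simp add: nsmul_add_right zcomb_add)
qed

lemma coord_zero: "e \<in> E \<Longrightarrow> coord 0 e = 0"
  using coord_add[of e 0 0] by simp

lemma coord_minus: "e \<in> E \<Longrightarrow> coord (- a) e = - coord a e"
  using coord_add[of e a "- a"] coord_zero[of e] by simp

lemma coord_diff: "e \<in> E \<Longrightarrow> coord (a - b) e = coord a e - coord b e"
  using coord_add[of e a "- b"] coord_minus[of e b] by simp

lemma coord_nsmul: "e \<in> E \<Longrightarrow> coord (nsmul n a) e = int n * coord a e"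
  by (induction n) (simp_all add: coord_zero coord_add algebra_simps)

lemma coord_zsmul: "e \<in> E \<Longrightarrow> coord (zsmul i a) e = i * coord a e"
  by (cases "0 \<le> i") (simp_all add: zsmul_def coord_nsmul coord_minus)

lemma coord_sum: "e \<in> E \<Longrightarrow> coord (\<Sum>x\<in>A. f x) e = (\<Sum>x\<in>A. coord (f x) e)"
  by (induction A rule: infinite_finite_induct) (simp_all add: coord_zero coord_add)

lemma coord_zcomb: "e \<in> E \<Longrightarrow> coord (zcomb Z c) e = (\<Sum>z\<in>Z. c z * coord z e)"
  unfolding zcomb_def by (simp add: coord_sum coord_zsmul)

lemma torsion_iff_coord: "a \<in> torsion \<longleftrightarrow> (\<forall>e\<in>E. coord a e = 0)"
proof
  assume "a \<in> torsion"
  then obtain m where m: "m \<ge> 1" "nsmul m a = 0" by (auto elim: isolatorE)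
  show "\<forall>e\<in>E. coord a e = 0"
  proof
    fix e assume e: "e \<in> E"
    have "int m * coord a e = 0" using coord_nsmul[OF e, of m a] m(2) coord_zero[OF e] by simp
    then show "coord a e = 0" using m(1) by simp
  qed
next
  assume "\<forall>e\<in>E. coord a e = 0"
  then have "zcomb E (coord a) = 0" using zcomb_cong[of E "coord a" "\<lambda>_. 0"] zcomb_zero by metis
  then show "a \<in> torsion" using nsmul_M_eq_zcomb_coord[of a] M_pos by (intro isolatorI) auto
qed

definition coord_norm :: "'a \<Rightarrow> int" where
  "coord_norm a = (\<Sum>e\<in>E. \<bar>coord a e\<bar>)"

lemma coord_norm_nonneg: "coord_norm a \<ge> 0"
  unfolding coord_norm_def by (simp add: sum_nonneg)

lemma abs_coord_le_coord_norm: "e \<in> E \<Longrightarrow> \<bar>coord a e\<bar> \<le> coord_norm a"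
  unfolding coord_norm_def by (rule member_le_sum) (use finite_E in auto)

lemma coord_norm_ge_1:
  assumes "a \<notin> torsion" shows "coord_norm a \<ge> 1"
proof -
  obtain e where "e \<in> E" "coord a e \<noteq> 0" using assms torsion_iff_coord by blast
  then show ?thesis using abs_coord_le_coord_norm[of e a] by linarith
qed

lemma coord_norm_zero: "coord_norm 0 = 0"
  unfolding coord_norm_def by (simp add: coord_zero)

lemma coord_norm_add: "coord_norm (a + b) \<le> coord_norm a + coord_norm b"
  unfolding coord_norm_def sum.distrib[symmetric]
  by (rule sum_mono) (simp add: coord_add abs_triangle_ineq)

lemma coord_norm_minus: "coord_norm (- a) = coord_norm a"
  unfolding coord_norm_def by (rule sum.cong) (simp_all add: coord_minus)

lemma coord_norm_nsmul: "coord_norm (nsmul m a) = int m * coord_norm a"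
  unfolding coord_norm_def by (simp add: coord_nsmul abs_mult sum_distrib_left)

lemma coord_norm_zcomb: "coord_norm (zcomb Z c) \<le> (\<Sum>z\<in>Z. \<bar>c z\<bar> * coord_norm z)"
proof -
  have "coord_norm (zcomb Z c) = (\<Sum>e\<in>E. \<bar>\<Sum>z\<in>Z. c z * coord z e\<bar>)"
    unfolding coord_norm_def by (rule sum.cong) (simp_all add: coord_zcomb)
  also have "\<dots> \<le> (\<Sum>e\<in>E. \<Sum>z\<in>Z. \<bar>c z\<bar> * \<bar>coord z e\<bar>)"
    by (rule sum_mono) (metis (no_types, lifting) abs_mult sum_abs sum.cong)
  also have "\<dots> = (\<Sum>z\<in>Z. \<bar>c z\<bar> * coord_norm z)"
    unfolding coord_norm_def by (subst sum.swap) (simp add: sum_distrib_left)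
  finally show ?thesis .
qed

text \<open>Writing a = \<Sum>s\<in>S. k s * s, a torsion element is determined by the residues of the
  k s modulo M.\<close>

lemma torsion_finite: "finite (torsion :: 'a set)"
proof -
  define g where "g x = x + zcomb E (\<lambda>e. - coord x e div int M)" for x
  define R where "R = PiE S (\<lambda>_. {0..<int M})"
  have "torsion \<subseteq> g ` zcomb S ` R"
  proof
    fix a :: 'a assume a: "a \<in> torsion"
    obtain k where k: "a = zcomb S k"
      using gen_S gen_eq_zspan[OF finite_S] unfolding zspan_def by blast
    define r where "r = restrict (\<lambda>s. k s mod int M) S"
    define q where "q s = k s div int M" for s
    have r: "r \<in> R" unfolding r_def R_def using M_pos by auto
    have "zcomb S k = zcomb S (\<lambda>s. r s + int M * q s)"
      by (rule zcomb_cong) (simp add: r_def q_def)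
    then have ak: "a = zcomb S r + nsmul M (zcomb S q)"
      using k by (simp add: zcomb_add zcomb_nsmul)
    have "zcomb E (coord (zcomb S q)) = zcomb E (\<lambda>e. - coord (zcomb S r) e div int M)"
    proof (rule zcomb_cong)
      fix e assume e: "e \<in> E"
      have "coord a e = 0" using a torsion_iff_coord e by blast
      then have "coord (zcomb S r) e = - (int M * coord (zcomb S q) e)"
        using ak coord_add[OF e] coord_nsmul[OF e] by simp
      then show "coord (zcomb S q) e = - coord (zcomb S r) e div int M" using M_pos by simp
    qed
    then have "a = g (zcomb S r)"
      using ak nsmul_M_eq_zcomb_coord unfolding g_def by simp
    then show "a \<in> g ` zcomb S ` R" using r by blast
  qed
  moreover have "finite R" unfolding R_def using finite_S by (intro finite_PiE) auto
  ultimately show ?thesis by (meson finite_imageI finite_subset)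
qed

lemma coord_zcomb_inj:
  assumes Z: "Z_indep Z" and eq: "\<And>e. e \<in> E \<Longrightarrow> coord (zcomb Z a) e = coord (zcomb Z b) e"
    and z: "z \<in> Z"
  shows "a z = b z"
proof -
  have "zcomb Z (\<lambda>z. a z - b z) \<in> torsion"
    unfolding torsion_iff_coord zcomb_diff[symmetric] using eq by (simp add: coord_diff)
  then obtain m where m: "m \<ge> 1" "nsmul m (zcomb Z (\<lambda>z. a z - b z)) = 0"
    by (auto elim: isolatorE)
  then have "zcomb Z (\<lambda>z. int m * (a z - b z)) = 0" by (simp add: zcomb_nsmul)
  then have "int m * (a z - b z) = 0" by (rule Z_indep_zcomb_eq_0[OF Z _ z])
  then show ?thesis using m(1) by simp
qed

text \<open>Combinations of Z with coefficients in [0, k) inject into a box of E-coordinates whose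
  side grows only linearly in k; this bounds the size of independent sets.\<close>

lemma card_grid_le:
  assumes Z: "Z_indep Z" and k: "k \<ge> 1"
  shows "k ^ card Z \<le> (2 * k * nat (\<Sum>z\<in>Z. coord_norm z) + 1) ^ card E"
proof -
  define w where "w = nat (\<Sum>z\<in>Z. coord_norm z)"
  have w: "int w = (\<Sum>z\<in>Z. coord_norm z)"
    unfolding w_def by (simp add: sum_nonneg coord_norm_nonneg)
  define G where "G = PiE Z (\<lambda>_. {0..<int k})"
  define B where "B = PiE E (\<lambda>_. {- int (k * w)..int (k * w)})"
  define h where "h a = restrict (coord (zcomb Z a)) E" for a
  have "h ` G \<subseteq> B"
  proof (rule image_subsetI)
    fix a assume a: "a \<in> G"
    have "\<bar>coord (zcomb Z a) e\<bar> \<le> int (k * w)" if e: "e \<in> E" for e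
    proof -
      have "\<bar>coord (zcomb Z a) e\<bar> \<le> coord_norm (zcomb Z a)" by (rule abs_coord_le_coord_norm[OF e])
      also have "\<dots> \<le> (\<Sum>z\<in>Z. \<bar>a z\<bar> * coord_norm z)" by (rule coord_norm_zcomb)
      also have "\<dots> \<le> (\<Sum>z\<in>Z. int k * coord_norm z)"
        using a coord_norm_nonneg unfolding G_def
        by (intro sum_mono mult_right_mono) (auto simp: PiE_iff)
      also have "\<dots> = int (k * w)" using w by (simp add: sum_distrib_left)
      finally show ?thesis .
    qed
    then show "h a \<in> B" unfolding h_def B_def by (auto simp: abs_le_iff minus_le_iff)
  qed
  moreover have "inj_on h G"
  proof (rule inj_onI)
    fix a b assume a: "a \<in> G" and b: "b \<in> G" and hab: "h a = h b"
    have "coord (zcomb Z a) e = coord (zcomb Z b) e" if "e \<in> E" for e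
      using fun_cong[OF hab, of e] that by (simp add: h_def)
    then show "a = b"
      using coord_zcomb_inj[OF Z] a b unfolding G_def by (intro PiE_ext) blast+
  qed
  moreover have "finite B" unfolding B_def using finite_E by (intro finite_PiE) auto
  ultimately have "card G \<le> card B" by (intro card_inj_on_le)
  moreover have "card G = k ^ card Z"
    unfolding G_def using Z_indep_finite[OF Z] by (simp add: card_PiE)
  moreover have "card B = (2 * k * w + 1) ^ card E"
    unfolding B_def using finite_E by (simp add: card_PiE nat_add_distrib nat_mult_distrib mult.assoc)
  ultimately show ?thesis unfolding w_def by simp
qed

lemma card_Z_indep_le:
  assumes Z: "Z_indep (Z :: 'a set)" shows "card Z \<le> card E"
proof (rule ccontr)
  assume "\<not> card Z \<le> card E"
  define w where "w = nat (\<Sum>z\<in>Z. coord_norm z)"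
  define k where "k = (2 * w + 1) ^ card E + 1"
  have k: "k \<ge> 1" unfolding k_def by simp
  have "k * k ^ card E = k ^ (card E + 1)" by simp
  also have "\<dots> \<le> k ^ card Z" using \<open>\<not> card Z \<le> card E\<close> k by (intro power_increasing) auto
  also have "\<dots> \<le> (2 * k * w + 1) ^ card E" using card_grid_le[OF Z k] unfolding w_def .
  also have "\<dots> \<le> ((2 * w + 1) * k) ^ card E" using k by (intro power_mono) (auto simp: algebra_simps)
  also have "\<dots> = (2 * w + 1) ^ card E * k ^ card E" by (simp only: power_mult_distrib)
  finally have "k \<le> (2 * w + 1) ^ card E" using k by simp
  then show False unfolding k_def by simp
qed

lemma card_le_rankZ: "Y \<subseteq> H \<Longrightarrow> Z_indep (Y :: 'a set) \<Longrightarrow> card Y \<le> rankZ H"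
  unfolding rankZ_def
  by (rule cSup_upper) (auto intro!: bdd_aboveI[of _ "card E"] card_Z_indep_le)

lemma torsion_if_small_rat_coord:
  assumes Y: "Z_indep Y" and B: "B \<ge> 1" "\<And>y. y \<in> Y \<Longrightarrow> coord_norm y \<le> int B"
    and g: "g \<in> isolator (zspan Y)"
    and small: "\<And>y. y \<in> Y \<Longrightarrow> \<bar>rat_coord Y g y\<bar> < 1 / (real (card Y) * real B)"
  shows "g \<in> torsion"
proof (rule ccontr)
  assume "g \<notin> torsion"
  obtain m c where m: "m \<ge> 1" and c: "nsmul m g = zcomb Y c"
    using g by (elim isolatorE) (auto simp: zspan_def)
  have "int m \<le> int m * coord_norm g" using coord_norm_ge_1[OF \<open>g \<notin> torsion\<close>] m by simp
  also have "\<dots> = coord_norm (zcomb Y c)" using coord_norm_nsmul c by metis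
  also have "\<dots> \<le> (\<Sum>y\<in>Y. \<bar>c y\<bar> * coord_norm y)" by (rule coord_norm_zcomb)
  also have "\<dots> \<le> (\<Sum>y\<in>Y. \<bar>c y\<bar> * int B)" using B(2) by (intro sum_mono mult_left_mono) auto
  finally have "real_of_int (int m) \<le> real_of_int (\<Sum>y\<in>Y. \<bar>c y\<bar> * int B)"
    by (simp only: of_int_le_iff)
  then have bound: "real m \<le> (\<Sum>y\<in>Y. real_of_int \<bar>c y\<bar>) * real B"
    by (simp add: sum_distrib_right)
  show False
  proof (cases "Y = {}")
    case True
    then show False using bound m by simp
  next
    case False
    have "(\<Sum>y\<in>Y. real_of_int \<bar>c y\<bar>) = (\<Sum>y\<in>Y. real m * \<bar>rat_coord Y g y\<bar>)"
      using rat_coord_eq[OF Y m c] m by (intro sum.cong) (simp_all add: abs_div)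
    also have "\<dots> < (\<Sum>y\<in>Y. real m * (1 / (real (card Y) * real B)))"
      using small m Z_indep_finite[OF Y] False by (intro sum_strict_mono mult_strict_left_mono) auto
    also have "\<dots> = real m / real B"
      using False Z_indep_finite[OF Y] B(1) by (simp add: field_simps)
    finally show False using bound B(1) by (simp add: field_simps)
  qed
qed


lemma torsion_if_same_grid_cell:
  assumes Y: "Z_indep Y" and B: "B \<ge> 1" "\<And>y. y \<in> Y \<Longrightarrow> coord_norm y \<le> int B"
    and g: "g \<in> isolator (zspan Y)" and h: "h \<in> isolator (zspan Y)"
    and same: "\<And>y. y \<in> Y \<Longrightarrow>
      \<lfloor>rat_coord Y g y * real (card Y * B)\<rfloor> = \<lfloor>rat_coord Y h y * real (card Y * B)\<rfloor>"
  shows "g - h \<in> torsion"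
proof (rule torsion_if_small_rat_coord[OF Y B])
  show "g - h \<in> isolator (zspan Y)"
    using subgrp_diff[OF subgrp_isolator[OF subgrp_zspan] g h] .
next
  fix y assume y: "y \<in> Y"
  have "card Y > 0" using y Z_indep_finite[OF Y] by (auto simp: card_gt_0_iff)
  then have N: "real (card Y * B) > 0" using B(1) by simp
  have "\<bar>rat_coord Y g y * real (card Y * B) - rat_coord Y h y * real (card Y * B)\<bar> < 1"
    using same[OF y] by linarith
  then have "\<bar>rat_coord Y g y - rat_coord Y h y\<bar> * real (card Y * B) < 1"
    by (simp add: left_diff_distrib[symmetric] abs_mult)
  then show "\<bar>rat_coord Y (g - h) y\<bar> < 1 / (real (card Y) * real B)"
    using N by (simp add: rat_coord_diff[OF Y g h y] field_simps)
qed
end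

section \<open>Counting cosets and the main estimate\<close>

lemma power_mult_le_const_mult_power:
  fixes y r e n c :: nat
  assumes "y \<le> r" "y \<le> e" "n = 0 \<Longrightarrow> r = 0"
  shows "(y * (1 + n * c)) ^ y \<le> ((e + 1) * (c + 1)) ^ e * n ^ r"
proof (cases "n = 0")
  case True
  then show ?thesis using assms by (simp add: Suc_le_eq)
next
  case False
  have "1 + n * c \<le> (c + 1) * n" using False by (simp add: algebra_simps)
  moreover have "y \<le> e + 1" using assms(2) by simp
  ultimately have "y * (1 + n * c) \<le> (e + 1) * (c + 1) * n"
    by (metis mult.assoc mult_le_mono)
  then have "(y * (1 + n * c)) ^ y \<le> ((e + 1) * (c + 1) * n) ^ y" by (rule power_mono) simp
  also have "\<dots> = ((e + 1) * (c + 1)) ^ y * n ^ y" by (simp only: power_mult_distrib)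
  also have "\<dots> \<le> ((e + 1) * (c + 1)) ^ e * n ^ r"
    using False assms by (intro mult_mono power_increasing) auto
  finally show ?thesis .
qed

context coordinates
begin

lemma card_cosets_isolator_le:
  assumes Y: "Z_indep Y" and K: "subgrp K" "Y \<subseteq> K" "K \<subseteq> isolator (zspan Y)"
    and B: "B \<ge> 1" "\<And>y. y \<in> Y \<Longrightarrow> coord_norm y \<le> int B"
  shows "finite (cosets K (zspan Y)) \<and>
    card (cosets K (zspan Y)) \<le> card (torsion :: 'a set) * (card Y * B) ^ card Y"
proof -
  have fY: "finite Y" using Y by (rule Z_indep_finite)
  define N where "N = card Y * B"
  define cell where "cell k = restrict (\<lambda>y. \<lfloor>frac (rat_coord Y k y) * real N\<rfloor>) Y" for k
  define red where "red k = k - zcomb Y (\<lambda>y. \<lfloor>rat_coord Y k y\<rfloor>)" for k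
  define cells where "cells = PiE Y (\<lambda>_. {0..<int N})"
  have red: "red k \<in> isolator (zspan Y)" if "k \<in> K" for k
    unfolding red_def using subgrp_diff[OF K(1) that subgrp_zcomb[OF K(1,2)]] K(3) by blast
  have cell: "cell k \<in> cells" for k
  proof -
    have "\<lfloor>frac (rat_coord Y k y) * real N\<rfloor> \<in> {0..<int N}" if "y \<in> Y" for y
    proof -
      have "card Y > 0" using that fY by (auto simp: card_gt_0_iff)
      then have "real N > 0" using B(1) unfolding N_def by simp
      then show ?thesis using frac_lt_1[of "rat_coord Y k y"] by (simp add: floor_less_iff)
    qed
    then show ?thesis unfolding cells_def cell_def by auto
  qed
  have red_coset: "k - red k \<in> zspan Y" for k
    unfolding red_def by (simp add: zcomb_in_zspan)
  have same_cell: "red k - red k' \<in> torsion"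
    if k: "k \<in> K" "k' \<in> K" and same: "cell k = cell k'" for k k'
  proof (rule torsion_if_same_grid_cell[OF Y B red[OF k(1)] red[OF k(2)]])
    fix y assume y: "y \<in> Y"
    have "k \<in> isolator (zspan Y)" "k' \<in> isolator (zspan Y)" using k K(3) by blast+
    then show "\<lfloor>rat_coord Y (red k) y * real (card Y * B)\<rfloor> =
        \<lfloor>rat_coord Y (red k') y * real (card Y * B)\<rfloor>"
      using fun_cong[OF same, of y] y unfolding cell_def red_def N_def
      by (simp add: rat_coord_minus_floor[OF Y _ y])
  qed
  have "finite cells" "card cells = N ^ card Y"
    unfolding cells_def using fY by (auto simp: card_PiE intro!: finite_PiE)
  with card_cosets_le_pigeonhole[OF subgrp_zspan \<open>finite cells\<close> torsion_finite cell red_coset same_cell]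
  show ?thesis unfolding N_def by (simp add: mult.commute)
qed

lemma subgrp_finitely_generated:
  assumes H: "subgrp (H :: 'a set)" shows "\<exists>X. finite X \<and> gen X = H"
proof -
  obtain Y where Y: "Y \<subseteq> H" "Z_indep Y" "\<And>Y'. Y' \<subseteq> H \<Longrightarrow> Z_indep Y' \<Longrightarrow> card Y' \<le> card Y"
    by (rule exists_maximal_Z_indep[of _ "card E"]) (auto intro: card_Z_indep_le)
  have fY: "finite Y" using Y(2) by (rule Z_indep_finite)
  define B where "B = Suc (nat (\<Sum>y\<in>Y. coord_norm y))"
  have "coord_norm y \<le> int B" if "y \<in> Y" for y
  proof -
    have "coord_norm y \<le> (\<Sum>y\<in>Y. coord_norm y)"
      using that fY coord_norm_nonneg by (intro member_le_sum) auto
    then show ?thesis unfolding B_def by linarith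
  qed
  moreover have "B \<ge> 1" unfolding B_def by simp
  ultimately have "finite (cosets H (zspan Y))"
    using card_cosets_isolator_le[OF Y(2) H Y(1) maximal_Z_indep_subset_isolator[OF Y]] by blast
  then show ?thesis by (rule finitely_generated_if_finite_cosets[OF H fY Y(1)])
qed

lemma subgrp_norm_witness:
  assumes "subgrp (H :: 'a set)"
  obtains X where "finite X" "gen X = H" "\<And>h. h \<in> X \<Longrightarrow> wordlen S h \<le> subgrp_norm S H"
proof -
  obtain X where X: "finite X" "gen X = H" using subgrp_finitely_generated[OF assms] by blast
  have "\<forall>h\<in>X. wordlen S h \<le> (\<Sum>x\<in>X. wordlen S x)"
    using X(1) by (intro ballI member_le_sum) auto
  then have "\<exists>m X. finite X \<and> gen X = H \<and> (\<forall>h\<in>X. wordlen S h \<le> m)"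
    using X by blast
  from LeastI_ex[OF this] show ?thesis
    using that unfolding subgrp_norm_def by blast
qed

lemma ex_word: "\<exists>xs. set xs \<subseteq> S \<union> uminus ` S \<and> sum_list xs = a"
proof -
  define W where "W = {a. \<exists>xs. set xs \<subseteq> S \<union> uminus ` S \<and> sum_list xs = a}"
  have "subgrp W" unfolding subgrp_def
  proof (intro conjI ballI)
    show "0 \<in> W" unfolding W_def by (auto intro!: exI[of _ "[]"])
  next
    fix x y assume "x \<in> W" "y \<in> W"
    then obtain xs ys where "set xs \<subseteq> S \<union> uminus ` S" "sum_list xs = x"
      "set ys \<subseteq> S \<union> uminus ` S" "sum_list ys = y"
      unfolding W_def by blast
    then show "x + y \<in> W" unfolding W_def by (auto intro!: exI[of _ "xs @ ys"])
  next
    fix x assume "x \<in> W"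
    then obtain xs where xs: "set xs \<subseteq> S \<union> uminus ` S" "sum_list xs = x"
      unfolding W_def by blast
    have "set (map uminus xs) \<subseteq> S \<union> uminus ` S" using xs(1) by auto
    moreover have "sum_list (map uminus xs) = - x"
      using xs(2) uminus_sum_list_map[of id xs] by (simp add: comp_def)
    ultimately show "- x \<in> W" unfolding W_def by blast
  qed
  moreover have "S \<subseteq> W" unfolding W_def by (auto intro!: exI[of _ "[s]" for s])
  ultimately have "gen S \<subseteq> W" by (rule gen_least)
  then show ?thesis using gen_S unfolding W_def by blast
qed

lemma wordlen_word:
  obtains xs where "length xs = wordlen S a" "set xs \<subseteq> S \<union> uminus ` S" "sum_list xs = a"
proof -
  obtain xs where "set xs \<subseteq> S \<union> uminus ` S \<and> sum_list xs = a" using ex_word by blast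
  then have "\<exists>n xs. length xs = n \<and> set xs \<subseteq> S \<union> uminus ` S \<and> sum_list xs = a" by blast
  from LeastI_ex[OF this] show ?thesis using that unfolding wordlen_def by blast
qed

lemma wordlen_eq_0D: "wordlen S a = 0 \<Longrightarrow> a = 0"
  by (metis wordlen_word length_0_conv sum_list.Nil)

definition gen_norm :: nat where
  "gen_norm = nat (\<Sum>s\<in>S. coord_norm s)"

lemma coord_norm_le_gen_norm:
  assumes "x \<in> S \<union> uminus ` S" shows "coord_norm x \<le> int gen_norm"
proof -
  obtain s where s: "s \<in> S" "coord_norm x = coord_norm s"
    using assms coord_norm_minus by auto
  have "coord_norm s \<le> (\<Sum>s\<in>S. coord_norm s)"
    using s(1) finite_S coord_norm_nonneg by (intro member_le_sum) auto
  then show ?thesis unfolding gen_norm_def using s(2) by linarith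
qed

lemma coord_norm_sum_list:
  "set xs \<subseteq> S \<union> uminus ` S \<Longrightarrow> coord_norm (sum_list xs) \<le> int (length xs * gen_norm)"
proof (induction xs)
  case Nil
  then show ?case by (simp add: coord_norm_zero)
next
  case (Cons x xs)
  have "coord_norm (sum_list (x # xs)) \<le> coord_norm x + coord_norm (sum_list xs)"
    using coord_norm_add by simp
  also have "\<dots> \<le> int gen_norm + int (length xs * gen_norm)"
    using Cons coord_norm_le_gen_norm by (intro add_mono) auto
  finally show ?case by simp
qed

lemma coord_norm_le_wordlen: "coord_norm a \<le> int (wordlen S a * gen_norm)"
  by (metis wordlen_word coord_norm_sum_list)

lemma det_sub_le_card_torsion:
  assumes H: "subgrp H" and X: "finite X" "gen X = H" "\<And>h. h \<in> X \<Longrightarrow> wordlen S h \<le> n"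
  obtains Y where "Y \<subseteq> X" "Z_indep Y"
    "det_sub H \<le> card (torsion :: 'a set) * (card Y * (1 + n * gen_norm)) ^ card Y"
proof -
  have XH: "X \<subseteq> H" using X(2) gen_subset by blast
  obtain Y where Y: "Y \<subseteq> X" "Z_indep Y" "\<And>Y'. Y' \<subseteq> X \<Longrightarrow> Z_indep Y' \<Longrightarrow> card Y' \<le> card Y"
    by (rule exists_maximal_Z_indep[of _ "card E"]) (auto intro: card_Z_indep_le)
  have "H \<subseteq> isolator (zspan Y)"
    using gen_least[OF subgrp_isolator[OF subgrp_zspan]] maximal_Z_indep_subset_isolator[OF Y] X(2)
    by blast
  then have K: "isolator H \<subseteq> isolator (zspan Y)" by (rule isolator_subset_isolator)
  have bound: "coord_norm y \<le> int (1 + n * gen_norm)" if "y \<in> Y" for y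
  proof -
    have "wordlen S y * gen_norm \<le> n * gen_norm"
      by (rule mult_le_mono1) (use X(3) that Y(1) in blast)
    then have "int (wordlen S y * gen_norm) \<le> int (1 + n * gen_norm)"
      by (simp only: of_nat_le_iff)
    then show ?thesis using coord_norm_le_wordlen[of y] by linarith
  qed
  have YK: "Y \<subseteq> isolator H" using Y(1) XH subset_isolator by blast
  have cosets: "finite (cosets (isolator H) (zspan Y)) \<and>
      card (cosets (isolator H) (zspan Y)) \<le> card (torsion :: 'a set) * (card Y * (1 + n * gen_norm)) ^ card Y"
    using card_cosets_isolator_le[OF Y(2) subgrp_isolator[OF H] YK K _ bound] by simp
  have "gen Y \<subseteq> H" using gen_least[OF H] Y(1) XH by blast
  then have "zspan Y \<subseteq> H" using zspan_subset_gen by blast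
  then have "det_sub H \<le> index (isolator H) (zspan Y)"
    unfolding det_sub_def using cosets by (intro index_antimono[OF H subgrp_zspan]) simp_all
  then show ?thesis using that[OF Y(1,2)] cosets unfolding index_eq_card_cosets by linarith
qed

definition bound_const :: nat where
  "bound_const = card (torsion :: 'a set) * ((card E + 1) * (gen_norm + 1)) ^ card E"

lemma bound_const_pos: "bound_const > 0"
  unfolding bound_const_def
  using torsion_finite subgrp_zero[OF subgrp_isolator[OF subgrp_singleton_zero]]
  by (auto simp: card_gt_0_iff)

lemma det_sub_le:
  assumes H: "subgrp (H :: 'a set)"
  shows "det_sub H \<le> bound_const * subgrp_norm S H ^ rankZ H"
proof -
  define n where "n = subgrp_norm S H"
  obtain X where X: "finite X" "gen X = H" "\<And>h. h \<in> X \<Longrightarrow> wordlen S h \<le> n"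
    using subgrp_norm_witness[OF H] unfolding n_def by blast
  obtain Y where Y: "Y \<subseteq> X" "Z_indep Y"
    and det: "det_sub H \<le> card (torsion :: 'a set) * (card Y * (1 + n * gen_norm)) ^ card Y"
    by (rule det_sub_le_card_torsion[OF H X])
  have "Y \<subseteq> H" using Y(1) X(2) gen_subset by blast
  then have "card Y \<le> rankZ H" using Y(2) by (rule card_le_rankZ)
  moreover have "card Y \<le> card E" using Y(2) by (rule card_Z_indep_le)
  moreover have "rankZ H = 0" if "n = 0"
  proof -
    have "X \<subseteq> {0}" using X(3) wordlen_eq_0D that by blast
    then have "H \<subseteq> {0}" using X(2) gen_least[OF subgrp_singleton_zero] by blast
    then show ?thesis by (rule rankZ_eq_0)
  qed
  ultimately have "(card Y * (1 + n * gen_norm)) ^ card Y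
      \<le> ((card E + 1) * (gen_norm + 1)) ^ card E * n ^ rankZ H"
    by (rule power_mult_le_const_mult_power)
  then show ?thesis
    using det unfolding bound_const_def n_def by (metis mult.assoc mult_le_mono2 order_trans)
qed

end

theorem mainTheorem9:
  fixes S :: "'a::ab_group_add set"
  assumes "finite S" and "gen S = UNIV"
  shows "\<exists>C::real. C > 0 \<and>
    (\<forall>H. subgrp H \<longrightarrow> real (det_sub H) \<le> C * real (subgrp_norm S H) ^ rankZ H)"
proof -
  obtain E M where "coordinates S E M" using coordinates_exist[OF assms] .
  then interpret coordinates S E M .
  show ?thesis
  proof (intro exI conjI allI impI)
    show "real bound_const > 0" using bound_const_pos by simp
    fix H :: "'a set" assume "subgrp H"
    then have "real (det_sub H) \<le> real (bound_const * subgrp_norm S H ^ rankZ H)"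
      using det_sub_le by (simp only: of_nat_le_iff)
    then show "real (det_sub H) \<le> real bound_const * real (subgrp_norm S H) ^ rankZ H"
      by simp
  qed
qed

end
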